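(* Let $k$ be a field of characteristic $\neq 2$ and let $\mathfrak g_\boxtimes$ be the Tetrahedron algebra over $k$. Let $\Omega$ (respectively $\Omega'$, $\Omega''$) be the subalgebra of $\mathfrak g_\boxtimes$ generated by $X_{12}$ and $X_{03}$ (respectively by $X_{23}$ and $X_{01}$; by $X_{31}$ and $X_{02}$). Then $\mathfrak g_\boxtimes=\Omega+\Omega'+\Omega''$.
   Context: The Tetrahedron algebra $\mathfrak g_\boxtimes$ is the Lie algebra over $k$ with generators $X_{ij}$ ($i,j\in\{0,1,2,3\}$, $i\neq j$) and relations $X_{ij}+X_{ji}=0$ for $i\neq j$; $[X_{ij},X_{jk}]=2(X_{ij}+X_{jk})$ for mutually distinct $i,j,k$; $[X_{hi},[X_{hi},[X_{hi},X_{jk}]]]=4[X_{hi},X_{jk}]$ for mutually distinct $h,i,j,k$. *)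

theory Defs
  imports Main
begin

definition lie_algebra :: "('k::field \<Rightarrow> 'v::ab_group_add \<Rightarrow> 'v) \<Rightarrow> ('v \<Rightarrow> 'v \<Rightarrow> 'v) \<Rightarrow> bool" where
  "lie_algebra sc br \<longleftrightarrow>
     (\<forall>a x y. sc a (x + y) = sc a x + sc a y) \<and>
     (\<forall>a b x. sc (a + b) x = sc a x + sc b x) \<and>
     (\<forall>a b x. sc a (sc b x) = sc (a * b) x) \<and>
     (\<forall>x. sc 1 x = x) \<and>
     (\<forall>x y z. br (x + y) z = br x z + br y z) \<and>
     (\<forall>x y z. br x (y + z) = br x y + br x z) \<and>
     (\<forall>a x y. br (sc a x) y = sc a (br x y)) \<and>
     (\<forall>a x y. br x (sc a y) = sc a (br x y)) \<and>
     (\<forall>x. br x x = 0) \<and>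
     (\<forall>x y z. br x (br y z) + br y (br z x) + br z (br x y) = 0)"

definition lie_subalg_gen :: "('k::field \<Rightarrow> 'v::ab_group_add \<Rightarrow> 'v) \<Rightarrow> ('v \<Rightarrow> 'v \<Rightarrow> 'v) \<Rightarrow> 'v set \<Rightarrow> 'v set" where
  "lie_subalg_gen sc br S = \<Inter>{A. S \<subseteq> A \<and> 0 \<in> A \<and> (\<forall>x\<in>A. \<forall>y\<in>A. x + y \<in> A) \<and>
       (\<forall>c. \<forall>x\<in>A. sc c x \<in> A) \<and> (\<forall>x\<in>A. \<forall>y\<in>A. br x y \<in> A)}"

definition tetrahedron_relations :: "('k::field \<Rightarrow> 'v::ab_group_add \<Rightarrow> 'v) \<Rightarrow> ('v \<Rightarrow> 'v \<Rightarrow> 'v) \<Rightarrow> (nat \<Rightarrow> nat \<Rightarrow> 'v) \<Rightarrow> bool" where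
  "tetrahedron_relations sc br X \<longleftrightarrow>
     (\<forall>i<4. \<forall>j<4. i \<noteq> j \<longrightarrow> X i j + X j i = 0) \<and>
     (\<forall>i<4. \<forall>j<4. \<forall>k<4. i \<noteq> j \<and> j \<noteq> k \<and> i \<noteq> k \<longrightarrow>
         br (X i j) (X j k) = sc 2 (X i j + X j k)) \<and>
     (\<forall>h<4. \<forall>i<4. \<forall>j<4. \<forall>k<4. distinct [h, i, j, k] \<longrightarrow>
         br (X h i) (br (X h i) (br (X h i) (X j k))) = sc 4 (br (X h i) (X j k)))"

end

theory Submission
  imports Defs "HOL.Vector_Spaces"
begin

text \<open>The sum \<open>S = \<Omega> + \<Omega>' + \<Omega>''\<close> is a subspace of the algebra containing every \<open>X\<^sub>i\<^sub>j\<close>,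
  so by the Jacobi identity it is the whole algebra as soon as \<open>[X\<^sub>i\<^sub>j, S] \<subseteq> S\<close> for every
  generator.
  Each of \<open>\<Omega>, \<Omega>', \<Omega>''\<close> is generated by the two edges \<open>X\<^sub>a\<^sub>b, X\<^sub>c\<^sub>d\<close> of a perfect
  matching of the tetrahedron. An edge \<open>{i, j}\<close> outside the matching shares exactly one
  vertex with each of them, so \<open>[X\<^sub>p\<^sub>q, X\<^sub>q\<^sub>r] = 2(X\<^sub>p\<^sub>q + X\<^sub>q\<^sub>r)\<close> puts \<open>[X\<^sub>a\<^sub>b, X\<^sub>i\<^sub>j]\<close> and
  \<open>[X\<^sub>c\<^sub>d, X\<^sub>i\<^sub>j]\<close> into the subspace \<open>\<Omega> + span {X\<^sub>i\<^sub>j}\<close>. That subspace is therefore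
  stable under \<open>ad X\<^sub>a\<^sub>b\<close> and \<open>ad X\<^sub>c\<^sub>d\<close>, hence under \<open>ad \<Omega>\<close>, which gives
  \<open>[X\<^sub>i\<^sub>j, \<Omega>] \<subseteq> \<Omega> + span {X\<^sub>i\<^sub>j} \<subseteq> S\<close>.\<close>

lemma (in module) lincomb_in_span_pair: "p *s a + q *s b \<in> span {a, b}"
  by (intro span_add span_scale span_base) auto

locale lie_alg =
  fixes sc :: "'k::field \<Rightarrow> 'v::ab_group_add \<Rightarrow> 'v"
    and br :: "'v \<Rightarrow> 'v \<Rightarrow> 'v"
  assumes lie: "lie_algebra sc br"
begin

sublocale vector_space sc
  using lie unfolding lie_algebra_def vector_space_def by auto

lemma bracket_add_left: "br (x + y) z = br x z + br y z"
  and bracket_add_right: "br x (y + z) = br x y + br x z"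
  and bracket_scale_left: "br (sc a x) y = sc a (br x y)"
  and bracket_scale_right: "br x (sc a y) = sc a (br x y)"
  and bracket_self: "br x x = 0"
  and jacobi: "br x (br y z) + br y (br z x) + br z (br x y) = 0"
  using lie unfolding lie_algebra_def by auto

lemma bracket_zero_left: "br 0 y = 0"
  and bracket_minus_left: "br (- x) y = - br x y"
proof -
  interpret additive "\<lambda>x. br x y" by unfold_locales (rule bracket_add_left)
  show "br 0 y = 0" "br (- x) y = - br x y" by (rule zero minus)+
qed

lemma bracket_minus_right: "br x (- y) = - br x y"
proof -
  interpret additive "br x" by unfold_locales (rule bracket_add_right)
  show ?thesis by (rule minus)
qed

lemma bracket_anticomm: "br y x = - br x y"
proof -
  have "br x y + br y x = 0"
    using bracket_self[of "x + y"]
    unfolding bracket_add_left bracket_add_right bracket_self[of x] bracket_self[of y]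
    by (simp add: add.commute)
  then show ?thesis by (simp add: eq_neg_iff_add_eq_0 add.commute)
qed

lemma bracket_bracket_left: "br (br x y) z = br x (br y z) - br y (br x z)"
proof -
  have "br y (br z x) = - br y (br x z)"
    by (simp add: bracket_anticomm[of x z] bracket_minus_right)
  moreover have "br z (br x y) = - br (br x y) z" by (rule bracket_anticomm)
  ultimately show ?thesis using jacobi[of x y z] by (simp add: algebra_simps)
qed

definition lie_subalgebra :: "'v set \<Rightarrow> bool" where
  "lie_subalgebra A \<longleftrightarrow> subspace A \<and> (\<forall>x\<in>A. \<forall>y\<in>A. br x y \<in> A)"

abbreviation gen :: "'v set \<Rightarrow> 'v set" where
  "gen \<equiv> lie_subalg_gen sc br"

lemma gen_eq_Inter: "gen S = \<Inter>{A. S \<subseteq> A \<and> lie_subalgebra A}"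
  unfolding lie_subalg_gen_def lie_subalgebra_def subspace_def by blast

lemma gen_superset: "S \<subseteq> gen S"
  unfolding gen_eq_Inter by blast

lemma gen_minimal: "S \<subseteq> A \<Longrightarrow> lie_subalgebra A \<Longrightarrow> gen S \<subseteq> A"
  unfolding gen_eq_Inter by blast

lemma lie_subalgebra_gen: "lie_subalgebra (gen S)"
  unfolding lie_subalgebra_def subspace_def lie_subalg_gen_def by blast

lemma subspace_gen: "subspace (gen S)"
  using lie_subalgebra_gen unfolding lie_subalgebra_def by blast

lemma bracket_gen: "x \<in> gen S \<Longrightarrow> y \<in> gen S \<Longrightarrow> br x y \<in> gen S"
  using lie_subalgebra_gen unfolding lie_subalgebra_def by blast

lemma gen_mono: "S \<subseteq> T \<Longrightarrow> gen S \<subseteq> gen T"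
  using gen_minimal[OF _ lie_subalgebra_gen] gen_superset by blast

lemma lie_subalgebra_stabilizer:
  assumes "subspace W"
  shows "lie_subalgebra {y. \<forall>w\<in>W. br y w \<in> W}"
  using assms unfolding lie_subalgebra_def subspace_def
  by (simp add: bracket_zero_left bracket_add_left bracket_scale_left bracket_bracket_left
      subspace_diff[OF assms])

lemma gen_stabilizes:
  assumes "subspace W" and "\<And>s w. s \<in> S \<Longrightarrow> w \<in> W \<Longrightarrow> br s w \<in> W"
    and "y \<in> gen S" and "w \<in> W"
  shows "br y w \<in> W"
proof -
  have "gen S \<subseteq> {y. \<forall>w\<in>W. br y w \<in> W}"
    using assms(2) by (intro gen_minimal lie_subalgebra_stabilizer[OF assms(1)]) blast
  with assms(3,4) show ?thesis by blast
qed

lemma gen_eqI: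
  assumes "subspace W" and "S \<subseteq> W" and "W \<subseteq> gen S"
    and "\<And>s w. s \<in> S \<Longrightarrow> w \<in> W \<Longrightarrow> br s w \<in> W"
  shows "gen S = W"
proof
  have "lie_subalgebra W"
    using assms gen_stabilizes unfolding lie_subalgebra_def by blast
  then show "gen S \<subseteq> W" using assms(2) by (rule gen_minimal[rotated])
qed (fact assms(3))

lemma bracket_gen_in_sum_span:
  assumes adj: "\<And>a. a \<in> T \<Longrightarrow> br a g \<in> {t + u |t u. t \<in> gen T \<and> u \<in> span {g}}"
    and y: "y \<in> gen T"
  shows "br y g \<in> {t + u |t u. t \<in> gen T \<and> u \<in> span {g}}" (is "_ \<in> ?W")
proof (rule gen_stabilizes[OF _ _ y])
  show W: "subspace ?W" by (intro subspace_sums subspace_gen subspace_span)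
  show "g \<in> ?W" using subspace_0[OF subspace_gen] span_base[of g "{g}"] by force
  fix a w assume a: "a \<in> T" and "w \<in> ?W"
  then obtain t u where w: "w = t + u" "t \<in> gen T" "u \<in> span {g}" by blast
  then obtain c where u: "u = sc c g" by (auto simp: span_singleton)
  have "br a t \<in> ?W"
    using bracket_gen[OF subsetD[OF gen_superset a] w(2)] subspace_0[OF subspace_span] by force
  moreover have "br a u \<in> ?W"
    unfolding u bracket_scale_right by (rule subspace_scale[OF W adj[OF a]])
  ultimately show "br a w \<in> ?W"
    unfolding w(1) bracket_add_right by (rule subspace_add[OF W])
qed

end

lemma perfect_matching_cases:
  fixes a b c d i j :: nat
  assumes "distinct [a, b, c, d]" "a < 4" "b < 4" "c < 4" "d < 4" "i < 4" "j < 4" "i \<noteq> j"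
  obtains "{i, j} = {a, b} \<or> {i, j} = {c, d}"
    | "{i, j} \<noteq> {a, b}" "{i, j} \<inter> {a, b} \<noteq> {}" "{i, j} \<noteq> {c, d}" "{i, j} \<inter> {c, d} \<noteq> {}"
proof -
  have "{a, b, c, d} = {..<4}"
    using assms(1-5) by (intro card_subset_eq) (auto simp: card_insert_if)
  then have "i \<in> {a, b, c, d}" "j \<in> {a, b, c, d}" using assms(6,7) by auto
  then consider "{i, j} = {a, b}" | "{i, j} = {c, d}"
    | "i \<in> {a, b}" "j \<in> {c, d}" | "i \<in> {c, d}" "j \<in> {a, b}"
    using assms(8) by (auto simp: insert_commute)
  then show thesis
    using that assms(1) by cases blast+
qed

locale tetrahedron = lie_alg sc br
  for sc :: "'k::field \<Rightarrow> 'v::ab_group_add \<Rightarrow> 'v" and br +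
  fixes X :: "nat \<Rightarrow> nat \<Rightarrow> 'v"
  assumes rel: "tetrahedron_relations sc br X"
begin

lemma X_swap: "i < 4 \<Longrightarrow> j < 4 \<Longrightarrow> i \<noteq> j \<Longrightarrow> X j i = - X i j"
  using rel unfolding tetrahedron_relations_def by (simp add: eq_neg_iff_add_eq_0 add.commute)

lemma bracket_X_path:
  "i < 4 \<Longrightarrow> j < 4 \<Longrightarrow> k < 4 \<Longrightarrow> i \<noteq> j \<Longrightarrow> j \<noteq> k \<Longrightarrow> i \<noteq> k \<Longrightarrow>
    br (X i j) (X j k) = sc 2 (X i j) + sc 2 (X j k)"
  using rel unfolding tetrahedron_relations_def by (simp add: scale_right_distrib)

lemma bracket_X_adjacent:
  assumes "i < 4" "j < 4" "k < 4" "l < 4" "i \<noteq> j" "k \<noteq> l"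
    and "{i, j} \<noteq> {k, l}" "{i, j} \<inter> {k, l} \<noteq> {}"
  shows "br (X i j) (X k l) \<in> span {X i j, X k l}"
proof -
  from assms(5-8) consider "i = k" "j \<noteq> l" | "i = l" "j \<noteq> k" | "j = k" "i \<noteq> l" | "j = l" "i \<noteq> k"
    by blast
  then have "\<exists>p q. br (X i j) (X k l) = sc p (X i j) + sc q (X k l)"
  proof cases
    case 1
    then have "br (X i j) (X k l) = sc 2 (X i j) + sc (- 2) (X k l)"
      using assms X_swap[of i j] bracket_X_path[of j i l]
      by (simp add: bracket_minus_left) (metis minus_diff_eq minus_minus)
    then show ?thesis by blast
  next
    case 2
    then have "br (X i j) (X k l) = sc (- 2) (X i j) + sc (- 2) (X k l)"
      using assms bracket_anticomm[of "X k i"] bracket_X_path[of k i j]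
      by simp (metis add.commute diff_conv_add_uminus minus_add_distrib minus_minus)
    then show ?thesis by blast
  next
    case 3
    then show ?thesis using assms bracket_X_path[of i j l] by blast
  next
    case 4
    then have "br (X i j) (X k l) = sc (- 2) (X i j) + sc 2 (X k l)"
      using assms X_swap[of j k] bracket_X_path[of i j k]
      by (simp add: bracket_minus_right)
    then show ?thesis by blast
  qed
  then show ?thesis using lincomb_in_span_pair by auto
qed

lemma X_mem_subspace:
  assumes "subspace W" "{i, j} = {a, b}" "X a b \<in> W" "a < 4" "b < 4" "a \<noteq> b"
  shows "X i j \<in> W"
proof -
  from assms(2) consider "i = a" "j = b" | "i = b" "j = a" by (auto simp: doubleton_eq_iff)
  then show ?thesis
    using assms(3-6) X_swap[of a b] subspace_neg[OF assms(1,3)] by cases simp_all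
qed

lemma bracket_X_matching_gen:
  assumes abcd: "distinct [a, b, c, d]" "a < 4" "b < 4" "c < 4" "d < 4"
    and ij: "i < 4" "j < 4" "i \<noteq> j"
    and W: "subspace W" "gen {X a b, X c d} \<subseteq> W" "X i j \<in> W"
    and t: "t \<in> gen {X a b, X c d}"
  shows "br (X i j) t \<in> W"
proof -
  let ?T = "{X a b, X c d}"
  show ?thesis
  proof (cases rule: perfect_matching_cases[OF abcd ij])
    case 1
    have "X a b \<in> gen ?T" "X c d \<in> gen ?T" using gen_superset by blast+
    with 1 have "X i j \<in> gen ?T"
      using X_mem_subspace[OF subspace_gen] abcd by (metis distinct_length_2_or_more)
    then show ?thesis using bracket_gen t W(2) by blast
  next
    case 2
    let ?W = "{t + u |t u. t \<in> gen ?T \<and> u \<in> span {X i j}}"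
    have "a \<noteq> b" "c \<noteq> d" using abcd(1) by auto
    then have "br (X a b) (X i j) \<in> span {X a b, X i j}" "br (X c d) (X i j) \<in> span {X c d, X i j}"
      using bracket_X_adjacent[OF abcd(2,3) ij(1,2) _ ij(3) not_sym[OF 2(1)]]
        bracket_X_adjacent[OF abcd(4,5) ij(1,2) _ ij(3) not_sym[OF 2(3)]] 2(2,4)
      by (simp_all add: Int_commute)
    moreover have "span {e, X i j} \<subseteq> ?W" if "e \<in> ?T" for e
    proof (rule span_minimal)
      have "e = e + 0" "X i j = 0 + X i j" by simp_all
      then show "{e, X i j} \<subseteq> ?W"
        using that gen_superset subspace_0[OF subspace_gen] subspace_0[OF subspace_span]
          span_base[of "X i j" "{X i j}"] by blast
    qed (intro subspace_sums subspace_gen subspace_span)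
    ultimately have "br t (X i j) \<in> ?W" by (intro bracket_gen_in_sum_span[OF _ t]) blast
    then obtain t' u where tu: "br t (X i j) = t' + u" "t' \<in> gen ?T" "u \<in> span {X i j}"
      by blast
    have "span {X i j} \<subseteq> W" using W by (intro span_minimal) auto
    with tu W have "br t (X i j) \<in> W" by (metis subsetD subspace_add)
    then show ?thesis
      unfolding bracket_anticomm[of "X i j" t] by (rule subspace_neg[OF W(1)])
  qed
qed

definition Omega :: "'v set" where "Omega = gen {X 1 2, X 0 3}"
definition Omega' :: "'v set" where "Omega' = gen {X 2 3, X 0 1}"
definition Omega'' :: "'v set" where "Omega'' = gen {X 3 1, X 0 2}"

definition Omega_sum :: "'v set" where
  "Omega_sum = {a + b + c |a b c. a \<in> Omega \<and> b \<in> Omega' \<and> c \<in> Omega''}"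

lemmas Omega_defs = Omega_def Omega'_def Omega''_def

lemma subspace_Omega_sum: "subspace Omega_sum"
proof -
  have "subspace {x + c |x c. x \<in> {a + b |a b. a \<in> Omega \<and> b \<in> Omega'} \<and> c \<in> Omega''}"
    unfolding Omega_defs by (intro subspace_sums subspace_gen)
  moreover have "{x + c |x c. x \<in> {a + b |a b. a \<in> Omega \<and> b \<in> Omega'} \<and> c \<in> Omega''} = Omega_sum"
    unfolding Omega_sum_def by blast
  ultimately show ?thesis by simp
qed

lemma Omega_subset_Omega_sum: "Omega \<subseteq> Omega_sum" "Omega' \<subseteq> Omega_sum" "Omega'' \<subseteq> Omega_sum"
proof -
  have zero: "0 \<in> Omega" "0 \<in> Omega'" "0 \<in> Omega''"
    unfolding Omega_defs by (rule subspace_0[OF subspace_gen])+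
  have "x + 0 + 0 \<in> Omega_sum" if "x \<in> Omega" for x
    unfolding Omega_sum_def using that zero by blast
  moreover have "0 + x + 0 \<in> Omega_sum" if "x \<in> Omega'" for x
    unfolding Omega_sum_def using that zero by blast
  moreover have "0 + 0 + x \<in> Omega_sum" if "x \<in> Omega''" for x
    unfolding Omega_sum_def using that zero by blast
  ultimately show "Omega \<subseteq> Omega_sum" "Omega' \<subseteq> Omega_sum" "Omega'' \<subseteq> Omega_sum"
    by auto
qed

lemma X_mem_Omega_sum:
  assumes "i < 4" "j < 4" "i \<noteq> j"
  shows "X i j \<in> Omega_sum"
proof -
  have gens: "X 1 2 \<in> Omega_sum" "X 0 3 \<in> Omega_sum" "X 2 3 \<in> Omega_sum"
    "X 0 1 \<in> Omega_sum" "X 3 1 \<in> Omega_sum" "X 0 2 \<in> Omega_sum"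
    using Omega_subset_Omega_sum gen_superset unfolding Omega_defs by blast+
  have "i \<in> {0, 1, 2, 3}" "j \<in> {0, 1, 2, 3}" using assms(1,2) by auto
  then have "{i, j} \<in> {{1, 2}, {0, 3}, {2, 3}, {0, 1}, {3, 1}, {0, 2}}"
    using assms(3) by (elim insertE emptyE) (simp_all add: insert_commute)
  then show ?thesis
    by (elim insertE emptyE)
      (rule X_mem_subspace[OF subspace_Omega_sum], assumption, rule gens, simp, simp, simp)+
qed

lemma Omega_sum_subset_gen: "Omega_sum \<subseteq> gen {X i j |i j. i < 4 \<and> j < 4 \<and> i \<noteq> j}"
  (is "_ \<subseteq> gen ?X")
proof -
  have X_mem: "X i j \<in> ?X" if "i < 4" "j < 4" "i \<noteq> j" for i j
    using that by blast
  have "Omega \<subseteq> gen ?X" "Omega' \<subseteq> gen ?X" "Omega'' \<subseteq> gen ?X"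
    unfolding Omega_defs
    by (intro gen_mono; unfold insert_subset; intro conjI empty_subsetI X_mem; simp)+
  then show ?thesis
    unfolding Omega_sum_def using subspace_add[OF subspace_gen] by blast
qed

lemma bracket_X_Omega_sum:
  assumes ij: "i < 4" "j < 4" "i \<noteq> j" and s: "s \<in> Omega_sum"
  shows "br (X i j) s \<in> Omega_sum"
proof -
  from s obtain a b c where abc: "s = a + b + c"
      "a \<in> gen {X 1 2, X 0 3}" "b \<in> gen {X 2 3, X 0 1}" "c \<in> gen {X 3 1, X 0 2}"
    unfolding Omega_sum_def Omega_defs by blast
  note sub = Omega_subset_Omega_sum[unfolded Omega_defs]
  note matching = bracket_X_matching_gen[OF _ _ _ _ _ ij subspace_Omega_sum _ X_mem_Omega_sum[OF ij]]
  have "br (X i j) a \<in> Omega_sum" "br (X i j) b \<in> Omega_sum" "br (X i j) c \<in> Omega_sum"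
    using matching[OF _ _ _ _ _ sub(1) abc(2)] matching[OF _ _ _ _ _ sub(2) abc(3)]
      matching[OF _ _ _ _ _ sub(3) abc(4)]
    by simp_all
  then show ?thesis
    unfolding abc(1) bracket_add_right by (intro subspace_add[OF subspace_Omega_sum])
qed

theorem gen_X_eq_Omega_sum: "gen {X i j |i j. i < 4 \<and> j < 4 \<and> i \<noteq> j} = Omega_sum"
  by (rule gen_eqI[OF subspace_Omega_sum _ Omega_sum_subset_gen])
    (auto intro: X_mem_Omega_sum bracket_X_Omega_sum)

end

theorem proposition1p5:
  fixes sc :: "'k::field \<Rightarrow> 'v::ab_group_add \<Rightarrow> 'v"
    and br :: "'v \<Rightarrow> 'v \<Rightarrow> 'v"
    and X :: "nat \<Rightarrow> nat \<Rightarrow> 'v"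
  assumes char: "(2::'k) \<noteq> 0"
    and lie: "lie_algebra sc br"
    and rel: "tetrahedron_relations sc br X"
  shows "lie_subalg_gen sc br {X i j | i j. i < 4 \<and> j < 4 \<and> i \<noteq> j} =
         {a + b + c | a b c.
            a \<in> lie_subalg_gen sc br {X 1 2, X 0 3} \<and>
            b \<in> lie_subalg_gen sc br {X 2 3, X 0 1} \<and>
            c \<in> lie_subalg_gen sc br {X 3 1, X 0 2}}"
proof -
  interpret tetrahedron sc br X
    by (rule tetrahedron.intro[OF lie_alg.intro[OF lie] tetrahedron_axioms.intro[OF rel]])
  show ?thesis
    using gen_X_eq_Omega_sum unfolding Omega_sum_def Omega_defs .
qed

end
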